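(* Let $\mathcal{C}_1,\dots,\mathcal{C}_D\subsetneq\mathbb{F}_q^n$ be linear codes and $\rho:=\rho(\mathcal{C}_1,\dots,\mathcal{C}_D)$. Then every $\rho$-closed subset $M\subseteq[n]^D$ is inner-generated for the code $\mathcal{C}_1\boxplus\cdots\boxplus\mathcal{C}_D$.
   Context: $\mathbb{F}_q$ is a finite field of characteristic 2; $|v|$ is Hamming weight, $\|v\|=|v|/|S|$ for $v\in\mathbb{F}_q^S$. $\mathcal{L}_i$ is the set of lines in $[n]^D$ parallel to the $i$-th axis (sets $A_1\times\cdots\times A_D$ with $A_i=[n]$, $|A_j|=1$ for $j\ne i$), $\mathcal{L}=\bigcup_i\mathcal{L}_i$; a line in $\mathcal{L}_i$ is identified with $[n]$ via the $i$-th coordinate. $\mathcal{C}^{(i)}=\{c\in\mathbb{F}_q^{[n]^D}:c|_\ell\in\mathcal{C}_i\ \forall\ell\in\mathcal{L}_i\}$, $\mathcal{C}_1\boxplus\cdots\boxplus\mathcal{C}_D=\sum_i\mathcal{C}^{(i)}$; $|x|_i$ is the number of $\ell\in\mathcal{L}_i$ with $x|_\ell\ne0$, $\|x\|_i=|x|_i/n^{D-1}$. The collection is $\rho$-product-expanding if every $c\in\mathcal{C}_1\boxplus\cdots\boxplus\mathcal{C}_D$ can be written $c=\sum_ia_i$, $a_i\in\mathcal{C}^{(i)}$, with $\rho\sum_i\|a_i\|_i\le\|c\|$; $\rho(\mathcal{C}_1,\dots,\mathcal{C}_D)$ is the maximal such $\rho$. For $\ell\in\mathcal{L}_i$, $\mathcal{C}_\ell=\{c:\operatorname{supp}c\subseteq\ell,\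 c|_\ell\in\mathcal{C}_i\}$; for $M\subseteq[n]^D$, $L(M)=\{\ell\in\mathcal{L}:\ell\subseteq M\}$. $M$ is inner-generated for $\mathcal{C}_1\boxplus\cdots\boxplus\mathcal{C}_D$ if every codeword $c$ of it with $\operatorname{supp}c\subseteq M$ lies in $\sum_{\ell\in L(M)}\mathcal{C}_\ell$. For $\varepsilon>0$, $M$ is $\varepsilon$-closed if for every line $\ell\in\mathcal{L}$ either $\ell\subseteq M$ or $|\ell\cap M|<\varepsilon n$. *)

theory Defs
  imports Complex_Main "HOL-Library.Function_Algebras" "HOL-Library.FuncSet"
begin

text \<open>Coordinates are 0-based: [n] = {0..<n}, axes are {0..<D}.
  Vectors in F_q^n are functions nat => 'a vanishing outside {0..<n};
  points of the grid [n]^D are extensional functions in PiE {0..<D} (%_. {0..<n});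
  words in F_q^([n]^D) are functions on points vanishing outside the grid.\<close>

definition vecs :: "nat \<Rightarrow> (nat \<Rightarrow> 'a::zero) set" where
  "vecs n = {v. \<forall>j. n \<le> j \<longrightarrow> v j = 0}"

definition linear_code :: "nat \<Rightarrow> (nat \<Rightarrow> 'a::field) set \<Rightarrow> bool" where
  "linear_code n V \<longleftrightarrow> V \<subseteq> vecs n \<and> 0 \<in> V \<and>
     (\<forall>u\<in>V. \<forall>v\<in>V. u + v \<in> V) \<and> (\<forall>a. \<forall>v\<in>V. (\<lambda>j. a * v j) \<in> V)"

definition grid :: "nat \<Rightarrow> nat \<Rightarrow> (nat \<Rightarrow> nat) set" where
  "grid D n = PiE {..<D} (\<lambda>_. {..<n})"

definition words :: "nat \<Rightarrow> nat \<Rightarrow> ((nat \<Rightarrow> nat) \<Rightarrow> 'a::zero) set" where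
  "words D n = {c. \<forall>x. x \<notin> grid D n \<longrightarrow> c x = 0}"

definition line :: "nat \<Rightarrow> nat \<Rightarrow> nat \<Rightarrow> (nat \<Rightarrow> nat) \<Rightarrow> (nat \<Rightarrow> nat) set" where
  "line D n i p = {x \<in> grid D n. \<forall>j<D. j \<noteq> i \<longrightarrow> x j = p j}"

definition lines :: "nat \<Rightarrow> nat \<Rightarrow> nat \<Rightarrow> (nat \<Rightarrow> nat) set set" where
  "lines D n i = line D n i ` grid D n"

definition restr :: "nat \<Rightarrow> ((nat \<Rightarrow> nat) \<Rightarrow> 'a::zero) \<Rightarrow> nat \<Rightarrow> (nat \<Rightarrow> nat) \<Rightarrow> nat \<Rightarrow> 'a" where
  "restr n c i p = (\<lambda>t. if t < n then c (p(i := t)) else 0)"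

definition dircode :: "nat \<Rightarrow> nat \<Rightarrow> (nat \<Rightarrow> (nat \<Rightarrow> 'a::zero) set) \<Rightarrow> nat
    \<Rightarrow> ((nat \<Rightarrow> nat) \<Rightarrow> 'a) set" where
  "dircode D n C i = {c \<in> words D n. \<forall>p\<in>grid D n. restr n c i p \<in> C i}"

definition sumcode :: "nat \<Rightarrow> nat \<Rightarrow> (nat \<Rightarrow> (nat \<Rightarrow> 'a::comm_monoid_add) set)
    \<Rightarrow> ((nat \<Rightarrow> nat) \<Rightarrow> 'a) set" where
  "sumcode D n C = {(\<Sum>i<D. a i) | a. \<forall>i<D. a i \<in> dircode D n C i}"

definition rel_wt :: "nat \<Rightarrow> nat \<Rightarrow> ((nat \<Rightarrow> nat) \<Rightarrow> 'a::zero) \<Rightarrow> real" where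
  "rel_wt D n c = real (card {x \<in> grid D n. c x \<noteq> 0}) / real (n ^ D)"

definition rel_wt_dir :: "nat \<Rightarrow> nat \<Rightarrow> nat \<Rightarrow> ((nat \<Rightarrow> nat) \<Rightarrow> 'a::zero) \<Rightarrow> real" where
  "rel_wt_dir D n i c =
     real (card {l \<in> lines D n i. \<exists>x\<in>l. c x \<noteq> 0}) / real (n ^ (D - 1))"

definition product_expanding :: "nat \<Rightarrow> nat \<Rightarrow> (nat \<Rightarrow> (nat \<Rightarrow> 'a::field) set) \<Rightarrow> real \<Rightarrow> bool" where
  "product_expanding D n C r \<longleftrightarrow>
     (\<forall>c\<in>sumcode D n C. \<exists>a. (\<forall>i<D. a i \<in> dircode D n C i) \<and> c = (\<Sum>i<D. a i) \<and>
        r * (\<Sum>i<D. rel_wt_dir D n i (a i)) \<le> rel_wt D n c)"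

definition rho_pe :: "nat \<Rightarrow> nat \<Rightarrow> (nat \<Rightarrow> (nat \<Rightarrow> 'a::field) set) \<Rightarrow> real" where
  "rho_pe D n C = Sup {r. product_expanding D n C r}"

text \<open>C_l for a line l in L_i (the axis i is recorded explicitly, which matters only when n = 1).\<close>
definition linecode :: "nat \<Rightarrow> nat \<Rightarrow> (nat \<Rightarrow> (nat \<Rightarrow> 'a::zero) set) \<Rightarrow> nat \<Rightarrow> (nat \<Rightarrow> nat) set
    \<Rightarrow> ((nat \<Rightarrow> nat) \<Rightarrow> 'a) set" where
  "linecode D n C i l = {c \<in> words D n. (\<forall>x. c x \<noteq> 0 \<longrightarrow> x \<in> l) \<and> (\<forall>p\<in>l. restr n c i p \<in> C i)}"

definition lines_in :: "nat \<Rightarrow> nat \<Rightarrow> (nat \<Rightarrow> nat) set \<Rightarrow> (nat \<times> (nat \<Rightarrow> nat) set) set" where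
  "lines_in D n M = {(i, l). i < D \<and> l \<in> lines D n i \<and> l \<subseteq> M}"

definition inner_generated :: "nat \<Rightarrow> nat \<Rightarrow> (nat \<Rightarrow> (nat \<Rightarrow> 'a::field) set) \<Rightarrow> (nat \<Rightarrow> nat) set \<Rightarrow> bool" where
  "inner_generated D n C M \<longleftrightarrow>
     (\<forall>c\<in>sumcode D n C. (\<forall>x. c x \<noteq> 0 \<longrightarrow> x \<in> M) \<longrightarrow>
        (\<exists>f. (\<forall>il\<in>lines_in D n M. f il \<in> linecode D n C (fst il) (snd il)) \<and>
             c = (\<Sum>il\<in>lines_in D n M. f il)))"

definition eps_closed :: "nat \<Rightarrow> nat \<Rightarrow> real \<Rightarrow> (nat \<Rightarrow> nat) set \<Rightarrow> bool" where
  "eps_closed D n e M \<longleftrightarrow>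
     (\<forall>i<D. \<forall>l\<in>lines D n i. l \<subseteq> M \<or> real (card (l \<inter> M)) < e * real n)"

end

theory Submission
  imports Defs
begin

text \<open>Write c as a sum of directional codewords a i and, among all such decompositions,
  take one that uses the fewest outer lines, i.e. lines not contained in M on which some a i
  is nonzero. Suppose there are k > 0 of them. The parts of the a i on outer lines add up to a
  word c' which, as c vanishes outside M, is supported on the union of the k sets l \<inter> M with
  l outer. Since M is \<rho>-closed, each of these has fewer than \<rho> n points, so the relative weight
  of c' is below \<rho> k / n^(D-1). Because this inequality is strict, some expansion constant
  s \<le> \<rho> (recall that \<rho> is only a supremum) still rewrites c' as a sum of directional codewords
  using fewer than k lines altogether. Replacing the outer parts by this sum gives a
  decomposition with fewer outer lines, a contradiction. So there are no outer lines, and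
  cutting each a i along its lines, all of which lie in M, shows that c is inner-generated.\<close>

lemma finite_grid: "finite (grid D n)"
  unfolding grid_def by (simp add: finite_PiE)

lemma finite_lines: "finite (lines D n i)"
  unfolding lines_def using finite_grid by simp

lemma line_subset_grid: "line D n i p \<subseteq> grid D n"
  unfolding line_def by auto

lemma mem_line_self: "x \<in> grid D n \<Longrightarrow> x \<in> line D n i x"
  unfolding line_def by auto

lemma line_in_lines: "x \<in> grid D n \<Longrightarrow> line D n i x \<in> lines D n i"
  unfolding lines_def by auto

lemma line_eq_if_mem: "x \<in> line D n i p \<Longrightarrow> line D n i x = line D n i p"
  unfolding line_def by auto

lemma mem_lines_iff: "x \<in> grid D n \<Longrightarrow> l \<in> lines D n i \<Longrightarrow> x \<in> l \<longleftrightarrow> l = line D n i x"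
  unfolding lines_def using line_eq_if_mem mem_line_self by blast

lemma fun_upd_in_grid: "p \<in> grid D n \<Longrightarrow> i < D \<Longrightarrow> t < n \<Longrightarrow> p(i := t) \<in> grid D n"
  unfolding grid_def by (auto simp: PiE_iff extensional_def)

lemma fun_upd_in_line: "p \<in> grid D n \<Longrightarrow> i < D \<Longrightarrow> t < n \<Longrightarrow> p(i := t) \<in> line D n i p"
  unfolding line_def using fun_upd_in_grid by auto

lemma line_fun_upd: "p \<in> grid D n \<Longrightarrow> i < D \<Longrightarrow> t < n \<Longrightarrow> line D n i (p(i := t)) = line D n i p"
  using fun_upd_in_line line_eq_if_mem by blast

lemma sum_fun_apply: "(\<Sum>a\<in>A. f a) x = (\<Sum>a\<in>A. f a x)"
  by (induct A rule: infinite_finite_induct) auto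

lemma dircode_nonzero_in_grid: "a \<in> dircode D n C i \<Longrightarrow> a x \<noteq> 0 \<Longrightarrow> x \<in> grid D n"
  unfolding dircode_def words_def by auto

lemma zero_in_dircode: "0 \<in> C i \<Longrightarrow> 0 \<in> dircode D n C i"
  unfolding dircode_def words_def restr_def by (simp add: zero_fun_def)

lemma add_in_dircode:
  assumes "linear_code n (C i)" "a \<in> dircode D n C i" "b \<in> dircode D n C i"
  shows "a + b \<in> dircode D n C i"
proof -
  have "restr n (a + b) i p = restr n a i p + restr n b i p" for p
    unfolding restr_def by (auto simp: fun_eq_iff)
  then show ?thesis
    using assms unfolding dircode_def linear_code_def words_def by auto
qed

definition line_mask :: "nat \<Rightarrow> nat \<Rightarrow> nat \<Rightarrow> ((nat \<Rightarrow> nat) set \<Rightarrow> bool)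
    \<Rightarrow> ((nat \<Rightarrow> nat) \<Rightarrow> 'a::zero) \<Rightarrow> (nat \<Rightarrow> nat) \<Rightarrow> 'a" where
  "line_mask D n i P a = (\<lambda>x. if P (line D n i x) then a x else 0)"

lemma line_mask_add_complement:
  "line_mask D n i P a + line_mask D n i (\<lambda>l. \<not> P l) a = (a :: _ \<Rightarrow> 'a::monoid_add)"
  unfolding line_mask_def by (auto simp: fun_eq_iff)

lemma restr_line_mask:
  "p \<in> grid D n \<Longrightarrow> i < D \<Longrightarrow>
   restr n (line_mask D n i P a) i p = (if P (line D n i p) then restr n a i p else 0)"
  unfolding restr_def line_mask_def by (auto simp: line_fun_upd fun_eq_iff)

lemma line_mask_in_dircode:
  assumes "a \<in> dircode D n C i" "i < D" "0 \<in> C i"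
  shows "line_mask D n i P a \<in> dircode D n C i"
proof -
  have "\<forall>p\<in>grid D n. restr n (line_mask D n i P a) i p \<in> C i"
    using assms by (auto simp: restr_line_mask dircode_def)
  then show ?thesis
    using assms by (auto simp: dircode_def words_def line_mask_def)
qed

definition decomposes :: "nat \<Rightarrow> nat \<Rightarrow> (nat \<Rightarrow> (nat \<Rightarrow> 'a::comm_monoid_add) set)
    \<Rightarrow> (nat \<Rightarrow> (nat \<Rightarrow> nat) \<Rightarrow> 'a) \<Rightarrow> ((nat \<Rightarrow> nat) \<Rightarrow> 'a) \<Rightarrow> bool" where
  "decomposes D n C a c \<longleftrightarrow> (\<forall>i<D. a i \<in> dircode D n C i) \<and> c = (\<Sum>i<D. a i)"

lemma sumcode_iff: "c \<in> sumcode D n C \<longleftrightarrow> (\<exists>a. decomposes D n C a c)"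
  unfolding sumcode_def decomposes_def by auto

lemma decomposes_nonzero_component:
  assumes "decomposes D n C a c" "c x \<noteq> 0"
  obtains i where "i < D" "a i x \<noteq> 0" "x \<in> grid D n"
proof -
  have "(\<Sum>i<D. a i x) \<noteq> 0"
    using assms by (simp add: decomposes_def sum_fun_apply)
  then obtain i where "i < D" "a i x \<noteq> 0"
    by (rule sum.not_neutral_contains_not_neutral) simp
  with assms show ?thesis
    using that dircode_nonzero_in_grid unfolding decomposes_def by blast
qed

lemma nonzero_in_sumcode_dims:
  assumes "c \<in> sumcode D n C" "c x \<noteq> 0"
  shows "0 < D" "0 < n"
proof -
  obtain a where "decomposes D n C a c"
    using assms(1) sumcode_iff by blast
  then obtain i where "i < D" "x \<in> grid D n"
    using assms(2) decomposes_nonzero_component by metis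
  then show "0 < D" "0 < n"
    unfolding grid_def by (auto simp: PiE_iff)
qed

definition support_lines :: "nat \<Rightarrow> nat \<Rightarrow> nat \<Rightarrow> ((nat \<Rightarrow> nat) \<Rightarrow> 'a::zero)
    \<Rightarrow> (nat \<Rightarrow> nat) set set" where
  "support_lines D n i a = {l \<in> lines D n i. \<exists>x\<in>l. a x \<noteq> 0}"

lemma finite_support_lines: "finite (support_lines D n i a)"
  unfolding support_lines_def using finite_lines by simp

lemma line_in_support_lines:
  "x \<in> grid D n \<Longrightarrow> a x \<noteq> 0 \<Longrightarrow> line D n i x \<in> support_lines D n i a"
  unfolding support_lines_def using line_in_lines mem_line_self by blast

lemma rel_wt_dir_eq:
  "rel_wt_dir D n i a = real (card (support_lines D n i a)) / real n ^ (D - 1)"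
  unfolding rel_wt_dir_def support_lines_def by simp

lemma product_expanding_zero: "product_expanding D n C 0"
  unfolding product_expanding_def sumcode_def rel_wt_def by auto

lemma product_expanding_le_rel_wt:
  assumes pe: "product_expanding D n C r" and c: "c \<in> sumcode D n C" "c \<noteq> 0"
  shows "r \<le> rel_wt D n c * real n ^ (D - 1)"
proof -
  obtain x where x: "c x \<noteq> 0"
    using c(2) by (auto simp: fun_eq_iff)
  have N: "0 < real n ^ (D - 1)"
    using nonzero_in_sumcode_dims(2)[where x = x, OF c(1) x] by simp
  obtain e where e: "decomposes D n C e c"
    and ineq: "r * (\<Sum>i<D. rel_wt_dir D n i (e i)) \<le> rel_wt D n c"
    using pe c(1) unfolding product_expanding_def decomposes_def by blast
  obtain j where j: "j < D" "e j x \<noteq> 0" "x \<in> grid D n"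
    using decomposes_nonzero_component[where x = x, OF e x] by blast
  have "support_lines D n j (e j) \<noteq> {}"
    using line_in_support_lines[OF j(3), of "e j"] j(2) by blast
  then have "1 \<le> card (support_lines D n j (e j))"
    using finite_support_lines by (simp add: Suc_le_eq card_gt_0_iff)
  then have "1 / real n ^ (D - 1) \<le> rel_wt_dir D n j (e j)"
    unfolding rel_wt_dir_eq using N by (simp add: divide_right_mono)
  also have "\<dots> \<le> (\<Sum>i<D. rel_wt_dir D n i (e i))"
    by (rule member_le_sum) (use j(1) in \<open>auto simp: rel_wt_dir_def\<close>)
  finally have lower: "1 / real n ^ (D - 1) \<le> (\<Sum>i<D. rel_wt_dir D n i (e i))" .
  show ?thesis
  proof (cases "r \<le> 0")
    case True
    moreover have "0 \<le> rel_wt D n c"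
      by (simp add: rel_wt_def)
    ultimately show ?thesis
      using N by (meson mult_nonneg_nonneg less_imp_le order_trans)
  next
    case False
    then have "r / real n ^ (D - 1) \<le> rel_wt D n c"
      using mult_left_mono[OF lower, of r] ineq by simp
    then show ?thesis
      using N by (simp add: pos_divide_le_eq)
  qed
qed

lemma bdd_above_product_expanding:
  "c \<in> sumcode D n C \<Longrightarrow> c \<noteq> 0 \<Longrightarrow> bdd_above {r. product_expanding D n C r}"
  using product_expanding_le_rel_wt by (fastforce simp: bdd_above_def)

lemma decomposition_with_few_lines:
  assumes zero: "\<forall>i<D. 0 \<in> C i" and c: "c \<in> sumcode D n C"
    and small: "real (card {x \<in> grid D n. c x \<noteq> 0}) < rho_pe D n C * real n * real k"
  obtains e where "decomposes D n C e c" "(\<Sum>i<D. card (support_lines D n i (e i))) < k"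
proof (cases "c = 0")
  case True
  have "decomposes D n C (\<lambda>_. 0) c"
    using True zero by (simp add: decomposes_def zero_in_dircode)
  moreover have "0 < k"
    using small by (cases k) auto
  ultimately show ?thesis
    using that by (simp add: support_lines_def)
next
  case False
  then obtain x0 where x0: "c x0 \<noteq> 0"
    by (auto simp: fun_eq_iff)
  have D: "0 < D" and n: "0 < n"
    using nonzero_in_sumcode_dims[where x = x0, OF c x0] by auto
  define N where "N = real n ^ (D - 1)"
  define w where "w = real (card {x \<in> grid D n. c x \<noteq> 0})"
  have N: "0 < N"
    using n by (simp add: N_def)
  have "real n ^ D = real n * N"
    using D by (cases D) (simp_all add: N_def)
  then have rel_wt_c: "rel_wt D n c = w / (real n * N)"
    by (simp add: rel_wt_def w_def)
  have k: "0 < k"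
    using small by (cases k) (auto simp: w_def)
  have "w / (real n * real k) < Sup {r. product_expanding D n C r}"
    using small n k by (simp add: rho_pe_def w_def pos_divide_less_eq mult_ac)
  then obtain s where s: "product_expanding D n C s" and ws: "w / (real n * real k) < s"
    using product_expanding_zero bdd_above_product_expanding[OF c False]
    by (subst (asm) less_cSup_iff) auto
  have "0 \<le> w / (real n * real k)"
    by (simp add: w_def)
  with ws have s_pos: "0 < s"
    by linarith
  obtain e where e: "decomposes D n C e c"
    and ineq: "s * (\<Sum>i<D. rel_wt_dir D n i (e i)) \<le> rel_wt D n c"
    using s c unfolding product_expanding_def decomposes_def by blast
  define K where "K = (\<Sum>i<D. card (support_lines D n i (e i)))"
  have "(\<Sum>i<D. rel_wt_dir D n i (e i)) = real K / N"
    unfolding rel_wt_dir_eq K_def N_def by (simp add: sum_divide_distrib)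
  with ineq have "s * real K \<le> w / real n"
    using N n by (simp add: rel_wt_c field_simps)
  also have "\<dots> < s * real k"
    using ws n k by (simp add: field_simps)
  finally have "K < k"
    using s_pos by simp
  then show ?thesis
    using that e unfolding K_def by blast
qed

definition outer_support :: "nat \<Rightarrow> nat \<Rightarrow> (nat \<Rightarrow> nat) set
    \<Rightarrow> (nat \<Rightarrow> (nat \<Rightarrow> nat) \<Rightarrow> 'a::zero) \<Rightarrow> (nat \<times> (nat \<Rightarrow> nat) set) set" where
  "outer_support D n M a = {(i, l). i < D \<and> l \<in> support_lines D n i (a i) \<and> \<not> l \<subseteq> M}"

lemma finite_outer_support: "finite (outer_support D n M a)"
proof (rule finite_subset)
  show "outer_support D n M a \<subseteq> Sigma {..<D} (lines D n)"
    by (auto simp: outer_support_def support_lines_def)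
qed (simp add: finite_lines)

lemma outer_part_support_subset:
  fixes a :: "nat \<Rightarrow> (nat \<Rightarrow> nat) \<Rightarrow> 'a::comm_monoid_add"
  assumes c: "c = (\<Sum>i<D. a i)" and cM: "\<forall>x. c x \<noteq> 0 \<longrightarrow> x \<in> M"
  shows "{x \<in> grid D n. (\<Sum>i<D. line_mask D n i (\<lambda>l. \<not> l \<subseteq> M) (a i)) x \<noteq> 0}
         \<subseteq> (\<Union>(i, l)\<in>outer_support D n M a. l \<inter> M)"
proof
  fix x
  assume "x \<in> {x \<in> grid D n. (\<Sum>i<D. line_mask D n i (\<lambda>l. \<not> l \<subseteq> M) (a i)) x \<noteq> 0}"
  then have x: "x \<in> grid D n"
    and nz: "(\<Sum>i<D. line_mask D n i (\<lambda>l. \<not> l \<subseteq> M) (a i) x) \<noteq> 0"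
    by (auto simp: sum_fun_apply)
  obtain i where "i < D" "line_mask D n i (\<lambda>l. \<not> l \<subseteq> M) (a i) x \<noteq> 0"
    using nz by (rule sum.not_neutral_contains_not_neutral) simp
  then have outer: "(i, line D n i x) \<in> outer_support D n M a"
    using x by (auto simp: outer_support_def line_mask_def line_in_support_lines split: if_splits)
  have "x \<in> M"
  proof (rule ccontr)
    assume "x \<notin> M"
    then have "line_mask D n j (\<lambda>l. \<not> l \<subseteq> M) (a j) x = a j x" for j
      using mem_line_self[OF x] by (auto simp: line_mask_def)
    then have "c x = (\<Sum>i<D. line_mask D n i (\<lambda>l. \<not> l \<subseteq> M) (a i) x)"
      unfolding c sum_fun_apply by simp
    with nz cM \<open>x \<notin> M\<close> show False
      by auto
  qed
  with outer mem_line_self[OF x] show "x \<in> (\<Union>(i, l)\<in>outer_support D n M a. l \<inter> M)"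
    by blast
qed

lemma card_outer_part_support_less:
  fixes a :: "nat \<Rightarrow> (nat \<Rightarrow> nat) \<Rightarrow> 'a::comm_monoid_add"
  assumes c: "c = (\<Sum>i<D. a i)" and cM: "\<forall>x. c x \<noteq> 0 \<longrightarrow> x \<in> M"
    and closed: "eps_closed D n \<epsilon> M" and outer: "outer_support D n M a \<noteq> {}"
  shows "real (card {x \<in> grid D n. (\<Sum>i<D. line_mask D n i (\<lambda>l. \<not> l \<subseteq> M) (a i)) x \<noteq> 0})
         < \<epsilon> * real n * real (card (outer_support D n M a))"
proof -
  let ?B = "outer_support D n M a"
  have "(\<Union>(i, l)\<in>?B. l \<inter> M) \<subseteq> grid D n"
    by (auto simp: outer_support_def support_lines_def lines_def dest: subsetD[OF line_subset_grid])
  then have "card {x \<in> grid D n. (\<Sum>i<D. line_mask D n i (\<lambda>l. \<not> l \<subseteq> M) (a i)) x \<noteq> 0}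
      \<le> card (\<Union>(i, l)\<in>?B. l \<inter> M)"
    using outer_part_support_subset[OF c cM] finite_subset[OF _ finite_grid] by (intro card_mono)
  also have "\<dots> \<le> (\<Sum>(i, l)\<in>?B. card (l \<inter> M))"
    using card_UN_le[OF finite_outer_support, of "\<lambda>(i, l). l \<inter> M"] by (simp add: case_prod_unfold)
  finally have "real (card {x \<in> grid D n. (\<Sum>i<D. line_mask D n i (\<lambda>l. \<not> l \<subseteq> M) (a i)) x \<noteq> 0})
      \<le> (\<Sum>(i, l)\<in>?B. real (card (l \<inter> M)))"
    by (simp add: case_prod_unfold flip: of_nat_sum)
  also have "\<dots> < (\<Sum>(i, l)\<in>?B. \<epsilon> * real n)"
    using closed by (intro sum_strict_mono[OF finite_outer_support outer])
      (auto simp: eps_closed_def outer_support_def support_lines_def)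
  finally show ?thesis
    by (simp add: mult_ac)
qed

lemma card_outer_support_inner_part_add:
  fixes b e :: "nat \<Rightarrow> (nat \<Rightarrow> nat) \<Rightarrow> 'a::monoid_add"
  shows "card (outer_support D n M (\<lambda>i. line_mask D n i (\<lambda>l. l \<subseteq> M) (b i) + e i))
     \<le> (\<Sum>i<D. card (support_lines D n i (e i)))"
proof -
  let ?a = "\<lambda>i. line_mask D n i (\<lambda>l. l \<subseteq> M) (b i) + e i"
  have "outer_support D n M ?a \<subseteq> Sigma {..<D} (\<lambda>i. support_lines D n i (e i))"
  proof
    fix il
    assume "il \<in> outer_support D n M ?a"
    then obtain i l x where il: "il = (i, l)" "i < D" "l \<in> lines D n i" "\<not> l \<subseteq> M"
      and x: "x \<in> l" "?a i x \<noteq> 0"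
      by (auto simp: outer_support_def support_lines_def)
    then have "line D n i x = l"
      unfolding lines_def using line_eq_if_mem by blast
    then have "e i x \<noteq> 0"
      using il x by (simp add: line_mask_def)
    with il x show "il \<in> Sigma {..<D} (\<lambda>i. support_lines D n i (e i))"
      by (auto simp: support_lines_def)
  qed
  then have "card (outer_support D n M ?a) \<le> card (Sigma {..<D} (\<lambda>i. support_lines D n i (e i)))"
    by (intro card_mono) (simp_all add: finite_support_lines)
  also have "\<dots> = (\<Sum>i<D. card (support_lines D n i (e i)))"
    by (simp add: finite_support_lines)
  finally show ?thesis .
qed

lemma decomposition_fewer_outer_lines:
  assumes lin: "\<forall>i<D. linear_code n (C i)" and closed: "eps_closed D n (rho_pe D n C) M"
    and a: "decomposes D n C a c" and cM: "\<forall>x. c x \<noteq> 0 \<longrightarrow> x \<in> M"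
    and outer: "outer_support D n M a \<noteq> {}"
  obtains a' where "decomposes D n C a' c"
    "card (outer_support D n M a') < card (outer_support D n M a)"
proof -
  define inner where "inner i = line_mask D n i (\<lambda>l. l \<subseteq> M) (a i)" for i
  define outer where "outer i = line_mask D n i (\<lambda>l. \<not> l \<subseteq> M) (a i)" for i
  have zero: "\<forall>i<D. 0 \<in> C i"
    using lin by (simp add: linear_code_def)
  have inner_dir: "\<forall>i<D. inner i \<in> dircode D n C i"
    and outer_dir: "\<forall>i<D. outer i \<in> dircode D n C i"
    using a zero line_mask_in_dircode unfolding inner_def outer_def decomposes_def by blast+
  have c: "c = (\<Sum>i<D. a i)"
    using a by (simp add: decomposes_def)
  have "(\<Sum>i<D. outer i) \<in> sumcode D n C"
    using outer_dir by (auto simp: sumcode_iff decomposes_def)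
  moreover have "real (card {x \<in> grid D n. (\<Sum>i<D. outer i) x \<noteq> 0})
      < rho_pe D n C * real n * real (card (outer_support D n M a))"
    using card_outer_part_support_less[OF c cM closed outer] unfolding outer_def .
  ultimately obtain e where e: "decomposes D n C e (\<Sum>i<D. outer i)"
    and few: "(\<Sum>i<D. card (support_lines D n i (e i))) < card (outer_support D n M a)"
    using decomposition_with_few_lines[OF zero] by blast
  define a' where "a' i = inner i + e i" for i
  have "c = (\<Sum>i<D. inner i) + (\<Sum>i<D. outer i)"
    unfolding c inner_def outer_def by (simp add: line_mask_add_complement flip: sum.distrib)
  moreover have "\<forall>i<D. a' i \<in> dircode D n C i"
    using e inner_dir lin add_in_dircode unfolding a'_def decomposes_def by blast
  ultimately have a': "decomposes D n C a' c"
    using e by (simp add: decomposes_def a'_def sum.distrib)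
  have "card (outer_support D n M a') \<le> (\<Sum>i<D. card (support_lines D n i (e i)))"
    unfolding a'_def inner_def by (rule card_outer_support_inner_part_add)
  then show ?thesis
    using that[OF a'] few by linarith
qed

lemma restrict_to_line_in_linecode:
  assumes a: "a \<in> dircode D n C i" and i: "i < D" and l: "l \<in> lines D n i"
  shows "(\<lambda>x. if x \<in> l then a x else 0) \<in> linecode D n C i l"
proof -
  have "restr n (\<lambda>x. if x \<in> l then a x else 0) i p \<in> C i" if p: "p \<in> l" for p
  proof -
    have "p \<in> grid D n" and "line D n i p = l"
      using l p line_subset_grid line_eq_if_mem unfolding lines_def by blast+
    then have "restr n (\<lambda>x. if x \<in> l then a x else 0) i p = restr n a i p"
      using fun_upd_in_line[OF _ i] by (auto simp: restr_def fun_eq_iff)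
    with a \<open>p \<in> grid D n\<close> show ?thesis
      by (simp add: dircode_def)
  qed
  with a l show ?thesis
    by (auto simp: linecode_def words_def dircode_def)
qed

lemma sum_restrict_to_lines:
  assumes a: "a \<in> dircode D n C i" and L: "L \<subseteq> lines D n i"
    and supp: "\<forall>x. a x \<noteq> 0 \<longrightarrow> line D n i x \<in> L"
  shows "(\<Sum>l\<in>L. (\<lambda>x. if x \<in> l then a x else 0)) = a"
proof
  fix x
  have fin: "finite L"
    using L finite_lines finite_subset by blast
  show "(\<Sum>l\<in>L. (\<lambda>x. if x \<in> l then a x else 0)) x = a x"
  proof (cases "a x = 0")
    case True
    then show ?thesis
      by (simp add: sum_fun_apply cong: if_cong)
  next
    case False
    then have x: "x \<in> grid D n"
      using a dircode_nonzero_in_grid by blast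
    have "(\<Sum>l\<in>L. if x \<in> l then a x else 0) = (\<Sum>l\<in>L. if l = line D n i x then a x else 0)"
      using L mem_lines_iff[OF x] by (intro sum.cong) auto
    with False fin supp show ?thesis
      by (simp add: sum_fun_apply)
  qed
qed

lemma line_decomposition_if_no_outer_support:
  assumes a: "decomposes D n C a c" and no_outer: "outer_support D n M a = {}"
  shows "\<exists>f. (\<forall>il\<in>lines_in D n M. f il \<in> linecode D n C (fst il) (snd il)) \<and>
             c = (\<Sum>il\<in>lines_in D n M. f il)"
proof -
  define f where "f = (\<lambda>(i, l) x. if x \<in> l then a i x else 0)"
  have f: "f (i, l) = (\<lambda>x. if x \<in> l then a i x else 0)" for i l
    by (simp add: f_def)
  have dir: "\<forall>i<D. a i \<in> dircode D n C i"
    using a by (simp add: decomposes_def)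
  have lines_in: "lines_in D n M = Sigma {..<D} (\<lambda>i. {l \<in> lines D n i. l \<subseteq> M})"
    unfolding lines_in_def by auto
  have "(\<Sum>l\<in>{l \<in> lines D n i. l \<subseteq> M}. f (i, l)) = a i" if i: "i < D" for i
    unfolding f
  proof (rule sum_restrict_to_lines)
    show "a i \<in> dircode D n C i"
      using dir i by blast
    show "\<forall>x. a i x \<noteq> 0 \<longrightarrow> line D n i x \<in> {l \<in> lines D n i. l \<subseteq> M}"
    proof (intro allI impI)
      fix x
      assume ax: "a i x \<noteq> 0"
      then have "line D n i x \<in> support_lines D n i (a i)"
        using dir i dircode_nonzero_in_grid line_in_support_lines by blast
      then show "line D n i x \<in> {l \<in> lines D n i. l \<subseteq> M}"
        using no_outer i by (auto simp: outer_support_def support_lines_def)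
    qed
  qed auto
  then have "c = (\<Sum>i<D. \<Sum>l\<in>{l \<in> lines D n i. l \<subseteq> M}. f (i, l))"
    using a by (simp add: decomposes_def)
  also have "\<dots> = (\<Sum>il\<in>lines_in D n M. f il)"
    unfolding lines_in by (subst sum.Sigma) (auto simp: finite_lines)
  finally have "c = (\<Sum>il\<in>lines_in D n M. f il)" .
  moreover have "f (i, l) \<in> linecode D n C i l" if "(i, l) \<in> lines_in D n M" for i l
    using that dir restrict_to_line_in_linecode unfolding f lines_in_def by blast
  ultimately show ?thesis
    by (intro exI[of _ f]) auto
qed

theorem lemma7:
  fixes C :: "nat \<Rightarrow> (nat \<Rightarrow> 'a::{field,finite}) set"
    and D n :: nat and M :: "(nat \<Rightarrow> nat) set"
  assumes "CHAR('a) = 2"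
    and "\<forall>i<D. linear_code n (C i) \<and> C i \<noteq> vecs n"
    and "M \<subseteq> grid D n"
    and "eps_closed D n (rho_pe D n C) M"
  shows "inner_generated D n C M"
  unfolding inner_generated_def
proof (intro ballI impI)
  fix c
  assume "c \<in> sumcode D n C" and supp: "\<forall>x. c x \<noteq> 0 \<longrightarrow> x \<in> M"
  then obtain a0 where "decomposes D n C a0 c"
    by (auto simp: sumcode_iff)
  then obtain a where a: "decomposes D n C a c"
    and min: "\<And>a'. decomposes D n C a' c \<Longrightarrow>
      card (outer_support D n M a) \<le> card (outer_support D n M a')"
    using ex_has_least_nat[of "\<lambda>a. decomposes D n C a c" a0
        "\<lambda>a. card (outer_support D n M a)"] by blast
  have lin: "\<forall>i<D. linear_code n (C i)"
    using assms(2) by blast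
  have "outer_support D n M a = {}"
  proof (rule ccontr)
    assume "outer_support D n M a \<noteq> {}"
    then obtain a' where "decomposes D n C a' c"
      "card (outer_support D n M a') < card (outer_support D n M a)"
      by (rule decomposition_fewer_outer_lines[OF lin assms(4) a supp])
    with min show False
      by (simp add: not_le[symmetric])
  qed
  with a show "\<exists>f. (\<forall>il\<in>lines_in D n M. f il \<in> linecode D n C (fst il) (snd il)) \<and>
      c = (\<Sum>il\<in>lines_in D n M. f il)"
    by (rule line_decomposition_if_no_outer_support)
qed

end
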